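(* Let $\mathcal{B}=\{B_j:j\in\mathbb{N}_0\}$ be a correlation basis, let $g,h\in\mathcal{L}^2([0,1])$ be standardized, and let $X,Y$ be random variables with continuous distribution functions $F_X,F_Y$. Then $$\rho_{\{g,h\}}(X,Y)=\sum_{j=1}^\infty\sum_{k=1}^\infty\alpha_j(g)\alpha_k(h)\rho^B_{jk}(X,Y),$$ where $\alpha_j(\psi)=\int_0^1\psi(u)B_j(u)\,\mathrm{d}u$ for $\psi\in\mathcal{L}^2([0,1])$, and $\sum_{j=1}^\infty\alpha_j(g)^2=\sum_{j=1}^\infty\alpha_j(h)^2=1$.
   Context: A correlation basis is a complete orthonormal system $\{B_j:j\in\mathbb{N}_0\}$ of $\mathcal{L}^2([0,1])$ (Lebesgue measure) with $B_0\equiv1$. $\psi$ is standardized if $\int_0^1\psi=0$ and $\int_0^1\psi^2=1$. $\rho_{\{g,h\}}(X,Y)=\rho(g(F_X(X)),h(F_Y(Y)))$ with $\rho$ Pearson correlation, and $\rho^B_{jk}(X,Y)=\rho_{\{B_j,B_k\}}(X,Y)$. *)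

theory Defs
  imports "HOL-Probability.Probability"
begin

definition L2_01 :: "(real \<Rightarrow> real) \<Rightarrow> bool" where
  "L2_01 f \<longleftrightarrow> f \<in> borel_measurable borel \<and> set_integrable lborel {0..1} (\<lambda>u. (f u)\<^sup>2)"

definition ip01 :: "(real \<Rightarrow> real) \<Rightarrow> (real \<Rightarrow> real) \<Rightarrow> real" where
  "ip01 f g = (LINT u:{0..1}|lborel. f u * g u)"

text \<open>Correlation basis: complete orthonormal system of L^2([0,1]) with B_0 = 1 (a.e.).
  Completeness = finite linear combinations are dense in L^2([0,1]).\<close>
definition correlation_basis :: "(nat \<Rightarrow> real \<Rightarrow> real) \<Rightarrow> bool" where
  "correlation_basis B \<longleftrightarrow>
     (\<forall>j. L2_01 (B j)) \<and>
     (\<forall>j k. ip01 (B j) (B k) = (if j = k then 1 else 0)) \<and>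
     (AE u in lborel. u \<in> {0..1} \<longrightarrow> B 0 u = 1) \<and>
     (\<forall>f. L2_01 f \<longrightarrow> (\<forall>e>0. \<exists>n c.
         ip01 (\<lambda>u. f u - (\<Sum>j<n. c j * B j u)) (\<lambda>u. f u - (\<Sum>j<n. c j * B j u)) < e))"

definition standardized :: "(real \<Rightarrow> real) \<Rightarrow> bool" where
  "standardized \<psi> \<longleftrightarrow> (LINT u:{0..1}|lborel. \<psi> u) = 0 \<and> (LINT u:{0..1}|lborel. (\<psi> u)\<^sup>2) = 1"

definition alpha :: "(nat \<Rightarrow> real \<Rightarrow> real) \<Rightarrow> nat \<Rightarrow> (real \<Rightarrow> real) \<Rightarrow> real" where
  "alpha B j \<psi> = (LINT u:{0..1}|lborel. \<psi> u * B j u)"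

definition pearson :: "'a measure \<Rightarrow> ('a \<Rightarrow> real) \<Rightarrow> ('a \<Rightarrow> real) \<Rightarrow> real" where
  "pearson M A C =
     ((LINT w|M. A w * C w) - (LINT w|M. A w) * (LINT w|M. C w)) /
     sqrt (((LINT w|M. (A w)\<^sup>2) - (LINT w|M. A w)\<^sup>2) * ((LINT w|M. (C w)\<^sup>2) - (LINT w|M. C w)\<^sup>2))"

definition distfun :: "'a measure \<Rightarrow> ('a \<Rightarrow> real) \<Rightarrow> real \<Rightarrow> real" where
  "distfun M X = cdf (distr M borel X)"

definition rho_gen :: "'a measure \<Rightarrow> (real \<Rightarrow> real) \<Rightarrow> (real \<Rightarrow> real) \<Rightarrow> ('a \<Rightarrow> real) \<Rightarrow> ('a \<Rightarrow> real) \<Rightarrow> real" where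
  "rho_gen M g h X Y = pearson M (\<lambda>w. g (distfun M X (X w))) (\<lambda>w. h (distfun M Y (Y w)))"

definition rhoB :: "(nat \<Rightarrow> real \<Rightarrow> real) \<Rightarrow> nat \<Rightarrow> nat \<Rightarrow> 'a measure \<Rightarrow> ('a \<Rightarrow> real) \<Rightarrow> ('a \<Rightarrow> real) \<Rightarrow> real" where
  "rhoB B j k M X Y = rho_gen M (B j) (B k) X Y"

end

theory Submission
  imports Defs
begin

(* By the probability integral transform, U = F_X(X) and V = F_Y(Y) are uniform on [0,1].
  Hence for standardized phi, psi the correlation rho_{phi,psi}(X,Y) is the cross moment
  E[phi(U) psi(V)], and the B_j(U) form an orthonormal system in L^2 in which phi(U) has the
  L^2-convergent Fourier expansion sum_j alpha_j(phi) B_j(U). Continuity of the inner product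
  gives rho_{g,h} = sum_j alpha_j(g) rho_{B_j,h}, and, by symmetry, each rho_{B_j,h} =
  sum_k alpha_k(h) rho_{B_j,B_k}. The terms with index 0 vanish because B_0 = 1 and
  standardized functions have mean 0; Parseval's identity gives sum_j alpha_j^2 = 1. *)

section \<open>Orthonormal expansions of square-integrable functions\<close>

lemma abs_mult_le_sum_squares: "\<bar>a * b\<bar> \<le> a\<^sup>2 + (b::real)\<^sup>2"
proof -
  have "2 * (\<bar>a\<bar> * \<bar>b\<bar>) \<le> a\<^sup>2 + b\<^sup>2"
    using sum_squares_bound[of "\<bar>a\<bar>" "\<bar>b\<bar>"] by (simp add: mult.assoc)
  moreover have "0 \<le> \<bar>a\<bar> * \<bar>b\<bar>" by simp
  ultimately show ?thesis unfolding abs_mult by linarith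
qed

definition square_integrable :: "'a measure \<Rightarrow> ('a \<Rightarrow> real) \<Rightarrow> bool" where
  "square_integrable M f \<longleftrightarrow> f \<in> borel_measurable M \<and> integrable M (\<lambda>x. (f x)\<^sup>2)"

lemma square_integrable_integrable_mult:
  assumes "square_integrable M f" "square_integrable M g"
  shows "integrable M (\<lambda>x. f x * g x)"
proof (rule Bochner_Integration.integrable_bound)
  show "integrable M (\<lambda>x. (f x)\<^sup>2 + (g x)\<^sup>2)"
    using assms unfolding square_integrable_def by simp
  show "(\<lambda>x. f x * g x) \<in> borel_measurable M"
    using assms unfolding square_integrable_def by auto
  show "AE x in M. norm (f x * g x) \<le> norm ((f x)\<^sup>2 + (g x)\<^sup>2)"
    using abs_mult_le_sum_squares by simp
qed

lemma square_integrable_add: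
  assumes "square_integrable M f" "square_integrable M g"
  shows "square_integrable M (\<lambda>x. f x + g x)"
proof -
  have "integrable M (\<lambda>x. (f x)\<^sup>2 + 2 * (f x * g x) + (g x)\<^sup>2)"
    using assms square_integrable_integrable_mult[OF assms] unfolding square_integrable_def by simp
  then show ?thesis
    using assms unfolding square_integrable_def by (auto simp: power2_sum algebra_simps)
qed

lemma square_integrable_cmult:
  "square_integrable M f \<Longrightarrow> square_integrable M (\<lambda>x. c * f x)"
  unfolding square_integrable_def by (auto simp: power_mult_distrib)

lemma square_integrable_diff:
  "square_integrable M f \<Longrightarrow> square_integrable M g \<Longrightarrow> square_integrable M (\<lambda>x. f x - g x)"
  using square_integrable_add[of M f "\<lambda>x. (-1) * g x"] square_integrable_cmult[of M g "-1"] by simp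

lemma square_integrable_sum:
  fixes A :: "nat \<Rightarrow> 'a \<Rightarrow> real"
  shows "(\<And>j. square_integrable M (A j)) \<Longrightarrow> square_integrable M (\<lambda>x. \<Sum>j<n. c j * A j x)"
  by (induction n)
    (simp_all add: square_integrable_def[of M "\<lambda>x. 0"] square_integrable_add square_integrable_cmult)

lemma Cauchy_Schwarz_integral:
  assumes f: "square_integrable M f" and g: "square_integrable M g"
  shows "(\<integral>x. f x * g x \<partial>M)\<^sup>2 \<le> (\<integral>x. (f x)\<^sup>2 \<partial>M) * (\<integral>x. (g x)\<^sup>2 \<partial>M)"
proof -
  have [measurable]: "f \<in> borel_measurable M" "g \<in> borel_measurable M"
    using f g unfolding square_integrable_def by auto
  have nn: "(\<integral>\<^sup>+x. ennreal (h x) \<partial>M) = ennreal (\<integral>x. h x \<partial>M)"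
    if "integrable M h" "\<And>x. 0 \<le> h x" for h
    using that by (intro nn_integral_eq_integral) auto
  have "ennreal ((\<integral>x. \<bar>f x * g x\<bar> \<partial>M)\<^sup>2) = (\<integral>\<^sup>+x. ennreal \<bar>f x\<bar> * ennreal \<bar>g x\<bar> \<partial>M)\<^sup>2"
    using nn[of "\<lambda>x. \<bar>f x * g x\<bar>"] integrable_abs[OF square_integrable_integrable_mult[OF f g]]
    by (simp add: abs_mult ennreal_mult' ennreal_power integral_nonneg_AE)
  also have "\<dots> \<le> (\<integral>\<^sup>+x. (ennreal \<bar>f x\<bar>)\<^sup>2 \<partial>M) * (\<integral>\<^sup>+x. (ennreal \<bar>g x\<bar>)\<^sup>2 \<partial>M)"
    by (rule Cauchy_Schwarz_nn_integral) auto
  also have "\<dots> = ennreal ((\<integral>x. (f x)\<^sup>2 \<partial>M) * (\<integral>x. (g x)\<^sup>2 \<partial>M))"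
    using nn[of "\<lambda>x. (f x)\<^sup>2"] nn[of "\<lambda>x. (g x)\<^sup>2"] f g
    by (simp add: ennreal_power ennreal_mult square_integrable_def)
  finally have abs_bound: "(\<integral>x. \<bar>f x * g x\<bar> \<partial>M)\<^sup>2 \<le> (\<integral>x. (f x)\<^sup>2 \<partial>M) * (\<integral>x. (g x)\<^sup>2 \<partial>M)"
    by (auto simp: ennreal_le_iff2)
  have "(\<integral>x. f x * g x \<partial>M)\<^sup>2 = \<bar>\<integral>x. f x * g x \<partial>M\<bar>\<^sup>2"
    by simp
  also have "\<dots> \<le> (\<integral>x. \<bar>f x * g x\<bar> \<partial>M)\<^sup>2"
    by (rule power_mono[OF integral_abs_bound abs_ge_zero])
  finally show ?thesis
    using abs_bound by linarith
qed

context
  fixes M :: "'a measure" and A :: "nat \<Rightarrow> 'a \<Rightarrow> real" and G :: "'a \<Rightarrow> real"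
  assumes A: "\<And>j. square_integrable M (A j)"
    and orthonormal: "\<And>j k. (\<integral>x. A j x * A k x \<partial>M) = (if j = k then 1 else 0)"
    and G: "square_integrable M G"
begin

lemma integral_square_residual:
  "(\<integral>x. (G x - (\<Sum>j<n. c j * A j x))\<^sup>2 \<partial>M)
    = (\<integral>x. (G x)\<^sup>2 \<partial>M) - 2 * (\<Sum>j<n. c j * (\<integral>x. G x * A j x \<partial>M)) + (\<Sum>j<n. (c j)\<^sup>2)"
proof -
  define S where "S x = (\<Sum>j<n. c j * A j x)" for x
  have S: "square_integrable M S"
    unfolding S_def using square_integrable_sum A by blast
  have GA: "integrable M (\<lambda>x. G x * A j x)" for j
    using square_integrable_integrable_mult[OF G A] .
  have AA: "integrable M (\<lambda>x. A j x * A k x)" for j k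
    using square_integrable_integrable_mult[OF A A] .
  have "(\<integral>x. G x * S x \<partial>M) = (\<integral>x. (\<Sum>j<n. c j * (G x * A j x)) \<partial>M)"
    unfolding S_def by (simp add: sum_distrib_left mult.left_commute)
  also have "\<dots> = (\<Sum>j<n. c j * (\<integral>x. G x * A j x \<partial>M))"
    using GA by (subst Bochner_Integration.integral_sum) auto
  finally have GS: "(\<integral>x. G x * S x \<partial>M) = (\<Sum>j<n. c j * (\<integral>x. G x * A j x \<partial>M))" .
  have "(\<integral>x. (S x)\<^sup>2 \<partial>M) = (\<Sum>j<n. \<Sum>k<n. c j * c k * (\<integral>x. A j x * A k x \<partial>M))"
    unfolding S_def power2_eq_square sum_product using AA by (simp add: ac_simps)
  also have "\<dots> = (\<Sum>j<n. (c j)\<^sup>2)"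
    by (simp add: orthonormal if_distrib[of "times _"] power2_eq_square cong: if_cong)
  finally have SS: "(\<integral>x. (S x)\<^sup>2 \<partial>M) = (\<Sum>j<n. (c j)\<^sup>2)" .
  have "(\<integral>x. (G x - S x)\<^sup>2 \<partial>M) = (\<integral>x. (G x)\<^sup>2 - 2 * (G x * S x) + (S x)\<^sup>2 \<partial>M)"
    by (simp add: power2_diff algebra_simps)
  also have "\<dots> = (\<integral>x. (G x)\<^sup>2 \<partial>M) - 2 * (\<integral>x. G x * S x \<partial>M) + (\<integral>x. (S x)\<^sup>2 \<partial>M)"
    using G S square_integrable_integrable_mult[OF G S] unfolding square_integrable_def by simp
  finally show ?thesis
    unfolding GS SS by (simp add: S_def)
qed

context
  fixes a :: "nat \<Rightarrow> real"
  assumes coeff: "\<And>j. (\<integral>x. G x * A j x \<partial>M) = a j"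
begin

lemma integral_square_Fourier_residual:
  "(\<integral>x. (G x - (\<Sum>j<n. a j * A j x))\<^sup>2 \<partial>M) = (\<integral>x. (G x)\<^sup>2 \<partial>M) - (\<Sum>j<n. (a j)\<^sup>2)"
  using integral_square_residual[where n=n and c=a] by (simp add: coeff power2_eq_square)

lemma Fourier_residual_le:
  "(\<integral>x. (G x - (\<Sum>j<n. a j * A j x))\<^sup>2 \<partial>M) \<le> (\<integral>x. (G x - (\<Sum>j<n. c j * A j x))\<^sup>2 \<partial>M)"
proof -
  have "0 \<le> (\<Sum>j<n. (c j - a j)\<^sup>2)"
    by (simp add: sum_nonneg)
  also have "\<dots> = (\<Sum>j<n. (c j)\<^sup>2) - 2 * (\<Sum>j<n. c j * a j) + (\<Sum>j<n. (a j)\<^sup>2)"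
    by (simp add: power2_diff sum.distrib sum_subtractf sum_distrib_left ac_simps)
  finally show ?thesis
    unfolding integral_square_Fourier_residual integral_square_residual coeff by simp
qed

lemma Fourier_residual_tendsto_zero:
  assumes complete: "\<And>e. e > 0 \<Longrightarrow> \<exists>n c. (\<integral>x. (G x - (\<Sum>j<n. c j * A j x))\<^sup>2 \<partial>M) < e"
  shows "(\<lambda>n. \<integral>x. (G x - (\<Sum>j<n. a j * A j x))\<^sup>2 \<partial>M) \<longlonglongrightarrow> 0"
proof (rule LIMSEQ_I)
  define E where "E n = (\<integral>x. (G x - (\<Sum>j<n. a j * A j x))\<^sup>2 \<partial>M)" for n
  have E_antimono: "E m \<le> E n" if "n \<le> m" for m n
    unfolding E_def integral_square_Fourier_residual
    using sum_mono2[of "{..<m}" "{..<n}" "\<lambda>j. (a j)\<^sup>2"] that by simp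
  fix e :: real
  assume "0 < e"
  then obtain n c where "(\<integral>x. (G x - (\<Sum>j<n. c j * A j x))\<^sup>2 \<partial>M) < e"
    using complete by blast
  then have "E n < e"
    unfolding E_def using Fourier_residual_le[where n=n and c=c] by linarith
  moreover have "0 \<le> E m" for m
    unfolding E_def by (simp add: integral_nonneg_AE)
  ultimately have "norm (E m - 0) < e" if "n \<le> m" for m
    using E_antimono[OF that] by (simp add: abs_of_nonneg)
  then show "\<exists>n. \<forall>m\<ge>n. norm (E m - 0) < e"
    unfolding E_def by blast
qed

lemma Parseval_identity:
  assumes complete: "\<And>e. e > 0 \<Longrightarrow> \<exists>n c. (\<integral>x. (G x - (\<Sum>j<n. c j * A j x))\<^sup>2 \<partial>M) < e"
  shows "(\<lambda>j. (a j)\<^sup>2) sums (\<integral>x. (G x)\<^sup>2 \<partial>M)"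
proof -
  have "(\<lambda>n. (\<integral>x. (G x)\<^sup>2 \<partial>M) - (\<integral>x. (G x - (\<Sum>j<n. a j * A j x))\<^sup>2 \<partial>M))
      \<longlonglongrightarrow> (\<integral>x. (G x)\<^sup>2 \<partial>M) - 0"
    by (intro tendsto_diff tendsto_const Fourier_residual_tendsto_zero complete)
  then show ?thesis
    unfolding sums_def integral_square_Fourier_residual by simp
qed

end

end

lemma integral_mult_tendsto_zero:
  assumes D: "\<And>n. square_integrable M (D n)" and H: "square_integrable M H"
    and lim: "(\<lambda>n. \<integral>x. (D n x)\<^sup>2 \<partial>M) \<longlonglongrightarrow> 0"
  shows "(\<lambda>n. \<integral>x. D n x * H x \<partial>M) \<longlonglongrightarrow> 0"
proof (rule Lim_null_comparison)
  show "\<forall>\<^sub>F n in sequentially. norm (\<integral>x. D n x * H x \<partial>M)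
      \<le> sqrt ((\<integral>x. (D n x)\<^sup>2 \<partial>M) * (\<integral>x. (H x)\<^sup>2 \<partial>M))"
    using Cauchy_Schwarz_integral[OF D H] by (intro always_eventually allI real_le_rsqrt) simp
  show "(\<lambda>n. sqrt ((\<integral>x. (D n x)\<^sup>2 \<partial>M) * (\<integral>x. (H x)\<^sup>2 \<partial>M))) \<longlonglongrightarrow> 0"
    using tendsto_real_sqrt[OF tendsto_mult[OF lim tendsto_const]] by simp
qed

lemma sums_integral_mult:
  fixes A :: "nat \<Rightarrow> 'a \<Rightarrow> real"
  assumes A: "\<And>k. square_integrable M (A k)"
    and G: "square_integrable M G" and H: "square_integrable M H"
    and lim: "(\<lambda>n. \<integral>x. (G x - (\<Sum>k<n. a k * A k x))\<^sup>2 \<partial>M) \<longlonglongrightarrow> 0"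
  shows "(\<lambda>k. a k * (\<integral>x. A k x * H x \<partial>M)) sums (\<integral>x. G x * H x \<partial>M)"
proof -
  define D where "D n x = G x - (\<Sum>k<n. a k * A k x)" for n x
  have D: "square_integrable M (D n)" for n
    unfolding D_def by (intro square_integrable_diff square_integrable_sum G A)
  have AH: "integrable M (\<lambda>x. A k x * H x)" for k
    by (rule square_integrable_integrable_mult[OF A H])
  have "(\<integral>x. D n x * H x \<partial>M) = (\<integral>x. G x * H x - (\<Sum>k<n. a k * (A k x * H x)) \<partial>M)" for n
    unfolding D_def by (simp add: left_diff_distrib sum_distrib_right mult.assoc)
  also have "\<dots> n = (\<integral>x. G x * H x \<partial>M) - (\<Sum>k<n. a k * (\<integral>x. A k x * H x \<partial>M))" for n
    using square_integrable_integrable_mult[OF G H] AH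
    by (subst Bochner_Integration.integral_diff) (auto simp: Bochner_Integration.integral_sum)
  finally have DH: "(\<integral>x. D n x * H x \<partial>M)
      = (\<integral>x. G x * H x \<partial>M) - (\<Sum>k<n. a k * (\<integral>x. A k x * H x \<partial>M))" for n .
  have "(\<lambda>n. \<integral>x. D n x * H x \<partial>M) \<longlonglongrightarrow> 0"
    by (rule integral_mult_tendsto_zero[OF D H]) (use lim in \<open>simp add: D_def\<close>)
  then have "(\<lambda>n. (\<integral>x. G x * H x \<partial>M) - (\<integral>x. D n x * H x \<partial>M)) \<longlonglongrightarrow> (\<integral>x. G x * H x \<partial>M) - 0"
    by (intro tendsto_diff tendsto_const)
  then show ?thesis
    unfolding sums_def DH by simp
qed

section \<open>The probability integral transform\<close>

lemma continuous_mono_sublevel_eq_atMost: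
  fixes F :: "real \<Rightarrow> real"
  assumes cont: "continuous_on UNIV F" and mono: "mono F"
    and above: "eventually (\<lambda>x. t < F x) at_top" and "F x\<^sub>0 \<le> t"
  obtains a where "{x. F x \<le> t} = {..a}" and "F a = t"
proof -
  define S where "S = {x. F x \<le> t}"
  have "S \<noteq> {}" "closed S"
    using \<open>F x\<^sub>0 \<le> t\<close> closed_Collect_le[OF cont continuous_on_const] unfolding S_def by auto
  obtain b where b: "\<And>x. x \<ge> b \<Longrightarrow> t < F x"
    using above by (auto simp: eventually_at_top_linorder)
  then have "bdd_above S"
    unfolding S_def bdd_above_def by (metis linorder_not_le mem_Collect_eq nle_le not_less)
  define a where "a = Sup S"
  have "a \<in> S"
    unfolding a_def using closed_contains_Sup[OF \<open>S \<noteq> {}\<close> \<open>bdd_above S\<close> \<open>closed S\<close>] .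
  have S_eq: "S = {..a}"
  proof
    show "S \<subseteq> {..a}" unfolding a_def using \<open>bdd_above S\<close> by (auto intro: cSup_upper)
    show "{..a} \<subseteq> S" using \<open>a \<in> S\<close> mono unfolding S_def by (auto dest: monoD intro: order_trans)
  qed
  have "t \<le> F (max a b)" using b[of "max a b"] by simp
  then obtain c where c: "a \<le> c" "F c = t"
    using IVT'[of F a t "max a b"] \<open>a \<in> S\<close> continuous_on_subset[OF cont] unfolding S_def by auto
  then have "c \<in> S" unfolding S_def by simp
  with S_eq c have "F a = t" by simp
  with S_eq show ?thesis unfolding S_def using that by blast
qed

lemma (in real_distribution) measure_cdf_le:
  assumes cont: "continuous_on UNIV (cdf M)" and t: "0 \<le> t" "t \<le> 1"
  shows "measure M {x. cdf M x \<le> t} = t"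
proof (cases "\<exists>x. cdf M x \<le> t \<and> t < 1")
  case True
  then obtain x where "cdf M x \<le> t" "t < 1" by blast
  moreover have "mono (cdf M)"
    by (simp add: cdf_nondecreasing monoI)
  moreover have "eventually (\<lambda>x. t < cdf M x) at_top"
    using order_tendstoD(1)[OF cdf_lim_at_top_prob \<open>t < 1\<close>] .
  ultimately obtain a where "{x. cdf M x \<le> t} = {..a}" "cdf M a = t"
    using continuous_mono_sublevel_eq_atMost[OF cont] by metis
  then show ?thesis unfolding cdf_def by simp
next
  case False
  show ?thesis
  proof (cases "t = 1")
    case True
    then show ?thesis using cdf_bounded_prob prob_space by simp
  next
    case False
    with \<open>\<not> (\<exists>x. cdf M x \<le> t \<and> t < 1)\<close> t have empty: "{x. cdf M x \<le> t} = {}"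
      by auto
    have "\<not> t > 0"
    proof
      assume "t > 0"
      then have "eventually (\<lambda>x. cdf M x < t) at_bot"
        using order_tendstoD(2)[OF cdf_lim_at_bot] by blast
      then obtain x where "cdf M x < t" by (auto simp: eventually_at_bot_linorder)
      with empty show False by (auto dest: less_imp_le)
    qed
    with empty t show ?thesis by simp
  qed
qed

lemma uniform_distributed_distfun:
  assumes "prob_space M" and X[measurable]: "X \<in> borel_measurable M"
    and cont: "continuous_on UNIV (distfun M X)"
  shows "distributed M lborel (\<lambda>w. distfun M X (X w)) (\<lambda>u. ennreal (indicator {0..1} u))"
proof -
  interpret prob_space M by fact
  interpret D: real_distribution "distr M borel X" using X by simp
  have [measurable]: "distfun M X \<in> borel_measurable borel"
    using cont by (rule borel_measurable_continuous_onI)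
  have "\<P>(w in M. distfun M X (X w) \<le> t) = t" if "0 \<le> t" "t \<le> 1" for t
  proof -
    have "\<P>(w in M. distfun M X (X w) \<le> t) = measure (distr M borel X) {x. distfun M X x \<le> t}"
      by (subst measure_distr) (auto intro!: arg_cong[where f="measure M"])
    also have "\<dots> = t"
      using D.measure_cdf_le[OF _ that] cont unfolding distfun_def by simp
    finally show ?thesis .
  qed
  then show ?thesis
    using uniform_distrI_borel_atLeastAtMost[of "\<lambda>w. distfun M X (X w)" 0 1] by simp
qed

lemma
  fixes f :: "real \<Rightarrow> real"
  assumes U: "distributed M lborel U (\<lambda>u. ennreal (indicator {0..1} u))"
    and f: "f \<in> borel_measurable borel"
  shows integral_uniform01: "(\<integral>w. f (U w) \<partial>M) = (LINT u:{0..1}|lborel. f u)"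
    and integrable_uniform01_iff: "integrable M (\<lambda>w. f (U w)) \<longleftrightarrow> set_integrable lborel {0..1} f"
  using distributed_integral[OF U f[folded measurable_lborel2]]
    distributed_integrable[OF U f[folded measurable_lborel2]]
  by (simp_all add: set_lebesgue_integral_def set_integrable_def)

lemma square_integrable_uniform01:
  fixes f :: "real \<Rightarrow> real"
  assumes U: "distributed M lborel U (\<lambda>u. ennreal (indicator {0..1} u))" and f: "L2_01 f"
  shows "square_integrable M (\<lambda>w. f (U w))"
proof -
  have [measurable]: "f \<in> borel_measurable borel" "U \<in> borel_measurable M"
    using f distributed_measurable[OF U] unfolding L2_01_def by auto
  show ?thesis
    using f integrable_uniform01_iff[OF U, of "\<lambda>u. (f u)\<^sup>2"]
    unfolding square_integrable_def L2_01_def by simp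
qed

lemma integral_mult_uniform01:
  fixes f g :: "real \<Rightarrow> real"
  assumes U: "distributed M lborel U (\<lambda>u. ennreal (indicator {0..1} u))"
    and [measurable]: "f \<in> borel_measurable borel" "g \<in> borel_measurable borel"
  shows "(\<integral>w. f (U w) * g (U w) \<partial>M) = ip01 f g"
  unfolding ip01_def by (rule integral_uniform01[OF U]) measurable

section \<open>Correlation bases\<close>

lemma correlation_basis_L2_01: "correlation_basis B \<Longrightarrow> L2_01 (B j)"
  unfolding correlation_basis_def by blast

lemma correlation_basis_orthonormal:
  "correlation_basis B \<Longrightarrow> ip01 (B j) (B k) = (if j = k then 1 else 0)"
  unfolding correlation_basis_def by blast

lemma alpha_zero_eq_integral:
  assumes B: "correlation_basis B" and f: "f \<in> borel_measurable borel"
  shows "alpha B 0 f = (LINT u:{0..1}|lborel. f u)"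
proof -
  have [measurable]: "B 0 \<in> borel_measurable borel"
    using correlation_basis_L2_01[OF B] unfolding L2_01_def by blast
  have "AE u in lborel. u \<in> {0..1} \<longrightarrow> B 0 u = 1"
    using B unfolding correlation_basis_def by blast
  then show ?thesis
    unfolding alpha_def using f
    by (intro set_lebesgue_integral_cong_AE) (auto elim!: AE_mp)
qed

lemma standardized_correlation_basis:
  assumes B: "correlation_basis B" and "j \<noteq> 0"
  shows "standardized (B j)"
proof -
  have "B j \<in> borel_measurable borel"
    using correlation_basis_L2_01[OF B] unfolding L2_01_def by blast
  then have "(LINT u:{0..1}|lborel. B j u) = ip01 (B j) (B 0)"
    using alpha_zero_eq_integral[OF B] unfolding alpha_def ip01_def by simp
  then show ?thesis
    using correlation_basis_orthonormal[OF B, of j] \<open>j \<noteq> 0\<close>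
    unfolding standardized_def ip01_def by (simp add: power2_eq_square)
qed

lemma correlation_basis_Fourier_series:
  assumes B: "correlation_basis B" and f: "L2_01 f"
  shows "(\<lambda>n. LINT u:{0..1}|lborel. (f u - (\<Sum>j<n. alpha B j f * B j u))\<^sup>2) \<longlonglongrightarrow> 0"
    and "(\<lambda>j. (alpha B j f)\<^sup>2) sums (LINT u:{0..1}|lborel. (f u)\<^sup>2)"
proof -
  define M where "M = density lborel (\<lambda>u. ennreal (indicator {0..1::real} u))"
  have U: "distributed M lborel (\<lambda>u. u) (\<lambda>u. ennreal (indicator {0..1} u))"
    unfolding M_def distributed_def by (simp add: distr_id2)
  have [measurable]: "f \<in> borel_measurable borel" "B j \<in> borel_measurable borel" for j
    using f correlation_basis_L2_01[OF B] unfolding L2_01_def by auto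
  have A: "square_integrable M (B j)" for j
    using square_integrable_uniform01[OF U correlation_basis_L2_01[OF B]] by simp
  have G: "square_integrable M f"
    using square_integrable_uniform01[OF U f] by simp
  have orthonormal: "(\<integral>u. B j u * B k u \<partial>M) = (if j = k then 1 else 0)" for j k
    using integral_mult_uniform01[OF U] correlation_basis_orthonormal[OF B] by simp
  have coeff: "(\<integral>u. f u * B j u \<partial>M) = alpha B j f" for j
    using integral_mult_uniform01[OF U] unfolding alpha_def ip01_def by simp
  have integral_M: "(\<integral>u. \<phi> u \<partial>M) = (LINT u:{0..1}|lborel. \<phi> u)"
    if "\<phi> \<in> borel_measurable borel" for \<phi> :: "real \<Rightarrow> real"
    using integral_uniform01[OF U that] by simp
  have complete: "\<exists>n c. (\<integral>u. (f u - (\<Sum>j<n. c j * B j u))\<^sup>2 \<partial>M) < e" if "e > 0" for e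
  proof -
    obtain n c where "ip01 (\<lambda>u. f u - (\<Sum>j<n. c j * B j u)) (\<lambda>u. f u - (\<Sum>j<n. c j * B j u)) < e"
      using B f \<open>e > 0\<close> unfolding correlation_basis_def by blast
    then show ?thesis
      unfolding ip01_def by (subst integral_M) (auto simp: power2_eq_square)
  qed
  show "(\<lambda>n. LINT u:{0..1}|lborel. (f u - (\<Sum>j<n. alpha B j f * B j u))\<^sup>2) \<longlonglongrightarrow> 0"
    using Fourier_residual_tendsto_zero[OF A orthonormal G coeff complete] by (simp add: integral_M)
  show "(\<lambda>j. (alpha B j f)\<^sup>2) sums (LINT u:{0..1}|lborel. (f u)\<^sup>2)"
    using Parseval_identity[OF A orthonormal G coeff complete] by (simp add: integral_M)
qed

lemma alpha_zero_standardized: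
  "correlation_basis B \<Longrightarrow> L2_01 f \<Longrightarrow> standardized f \<Longrightarrow> alpha B 0 f = 0"
  by (simp add: alpha_zero_eq_integral L2_01_def standardized_def)

lemma sums_tail_if_head_zero:
  fixes f :: "nat \<Rightarrow> 'a::real_normed_vector"
  shows "f sums s \<Longrightarrow> f 0 = 0 \<Longrightarrow> (\<lambda>n. f (Suc n)) sums s"
  using sums_Suc_iff[of f s] by simp

lemma Parseval_standardized:
  assumes B: "correlation_basis B" and f: "L2_01 f" "standardized f"
  shows "(\<lambda>j. (alpha B (Suc j) f)\<^sup>2) sums 1"
  using sums_tail_if_head_zero[OF correlation_basis_Fourier_series(2)[OF B f(1)]] f
  by (simp add: alpha_zero_standardized[OF B] standardized_def)

lemma sums_Fourier_cross_moment:
  fixes f :: "real \<Rightarrow> real"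
  assumes U: "distributed M lborel U (\<lambda>u. ennreal (indicator {0..1} u))"
    and B: "correlation_basis B" and f: "L2_01 f" "standardized f" and H: "square_integrable M H"
  shows "(\<lambda>j. alpha B (Suc j) f * (\<integral>w. B (Suc j) (U w) * H w \<partial>M)) sums (\<integral>w. f (U w) * H w \<partial>M)"
proof -
  have [measurable]: "f \<in> borel_measurable borel" "B j \<in> borel_measurable borel" for j
    using f correlation_basis_L2_01[OF B] unfolding L2_01_def by auto
  have "(\<lambda>n. \<integral>w. (f (U w) - (\<Sum>j<n. alpha B j f * B j (U w)))\<^sup>2 \<partial>M) \<longlonglongrightarrow> 0"
    using correlation_basis_Fourier_series(1)[OF B f(1)]
    by (subst integral_uniform01[OF U, of "\<lambda>u. (f u - (\<Sum>j<_. alpha B j f * B j u))\<^sup>2"]) auto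
  then have "(\<lambda>j. alpha B j f * (\<integral>w. B j (U w) * H w \<partial>M)) sums (\<integral>w. f (U w) * H w \<partial>M)"
    using square_integrable_uniform01[OF U correlation_basis_L2_01[OF B]]
      square_integrable_uniform01[OF U f(1)] H
    by (intro sums_integral_mult)
  then show ?thesis
    by (rule sums_tail_if_head_zero) (simp add: alpha_zero_standardized[OF B f])
qed

section \<open>Expansion of rank correlations\<close>

lemma pearson_standardized:
  assumes "(LINT w|M. A w) = 0" "(LINT w|M. (A w)\<^sup>2) = 1"
    and "(LINT w|M. C w) = 0" "(LINT w|M. (C w)\<^sup>2) = 1"
  shows "pearson M A C = (LINT w|M. A w * C w)"
  using assms unfolding pearson_def by simp

lemma standardized_uniform01_moments:
  fixes f :: "real \<Rightarrow> real"
  assumes U: "distributed M lborel U (\<lambda>u. ennreal (indicator {0..1} u))"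
    and [measurable]: "f \<in> borel_measurable borel" and f: "standardized f"
  shows "(\<integral>w. f (U w) \<partial>M) = 0" and "(\<integral>w. (f (U w))\<^sup>2 \<partial>M) = 1"
proof -
  have "(\<integral>w. f (U w) \<partial>M) = (LINT u:{0..1}|lborel. f u)"
    by (rule integral_uniform01[OF U]) measurable
  then show "(\<integral>w. f (U w) \<partial>M) = 0"
    using f unfolding standardized_def by simp
  have "(\<integral>w. (f (U w))\<^sup>2 \<partial>M) = (LINT u:{0..1}|lborel. (f u)\<^sup>2)"
    by (rule integral_uniform01[OF U]) measurable
  then show "(\<integral>w. (f (U w))\<^sup>2 \<partial>M) = 1"
    using f unfolding standardized_def by simp
qed

lemma rho_gen_eq_cross_moment:
  assumes M: "prob_space M"
    and X: "X \<in> borel_measurable M" "continuous_on UNIV (distfun M X)"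
    and Y: "Y \<in> borel_measurable M" "continuous_on UNIV (distfun M Y)"
    and g: "g \<in> borel_measurable borel" "standardized g"
    and h: "h \<in> borel_measurable borel" "standardized h"
  shows "rho_gen M g h X Y = (\<integral>w. g (distfun M X (X w)) * h (distfun M Y (Y w)) \<partial>M)"
  unfolding rho_gen_def
  using standardized_uniform01_moments[OF uniform_distributed_distfun[OF M X] g]
    standardized_uniform01_moments[OF uniform_distributed_distfun[OF M Y] h]
  by (rule pearson_standardized)

lemma rho_gen_commute: "rho_gen M g h X Y = rho_gen M h g Y X"
  unfolding rho_gen_def pearson_def by (simp add: mult.commute)

lemma sums_rho_gen_Fourier:
  assumes M: "prob_space M" and B: "correlation_basis B"
    and X: "X \<in> borel_measurable M" "continuous_on UNIV (distfun M X)"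
    and Y: "Y \<in> borel_measurable M" "continuous_on UNIV (distfun M Y)"
    and f: "L2_01 f" "standardized f" and \<psi>: "L2_01 \<psi>" "standardized \<psi>"
  shows "(\<lambda>j. alpha B (Suc j) f * rho_gen M (B (Suc j)) \<psi> X Y) sums rho_gen M f \<psi> X Y"
proof -
  have measurable: "\<phi> \<in> borel_measurable borel" if "L2_01 \<phi>" for \<phi>
    using that unfolding L2_01_def by blast
  note rho = rho_gen_eq_cross_moment[OF M X Y measurable _ measurable]
  show ?thesis
    using sums_Fourier_cross_moment[OF uniform_distributed_distfun[OF M X] B f
        square_integrable_uniform01[OF uniform_distributed_distfun[OF M Y] \<psi>(1)]]
    by (simp add: rho f \<psi> correlation_basis_L2_01[OF B] standardized_correlation_basis[OF B])
qed

theorem lemma2: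
  fixes M :: "'a measure" and B :: "nat \<Rightarrow> real \<Rightarrow> real" and g h :: "real \<Rightarrow> real"
    and X Y :: "'a \<Rightarrow> real"
  assumes "prob_space M"
    and "correlation_basis B"
    and "L2_01 g" and "L2_01 h"
    and "standardized g" and "standardized h"
    and "X \<in> borel_measurable M" and "Y \<in> borel_measurable M"
    and "continuous_on UNIV (distfun M X)" and "continuous_on UNIV (distfun M Y)"
  shows "(\<forall>j. summable (\<lambda>k. alpha B (Suc j) g * alpha B (Suc k) h * rhoB B (Suc j) (Suc k) M X Y))
    \<and> (\<lambda>j. \<Sum>k. alpha B (Suc j) g * alpha B (Suc k) h * rhoB B (Suc j) (Suc k) M X Y)
        sums (rho_gen M g h X Y)
    \<and> (\<lambda>j. (alpha B (Suc j) g)\<^sup>2) sums 1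
    \<and> (\<lambda>j. (alpha B (Suc j) h)\<^sup>2) sums 1"
proof -
  note B = assms(2) and X = assms(7,9) and Y = assms(8,10)
  have outer: "(\<lambda>j. alpha B (Suc j) g * rho_gen M (B (Suc j)) h X Y) sums rho_gen M g h X Y"
    by (rule sums_rho_gen_Fourier[OF assms(1) B X Y assms(3,5,4,6)])
  have "(\<lambda>k. alpha B (Suc k) h * rhoB B (Suc j) (Suc k) M X Y)
      sums rho_gen M (B (Suc j)) h X Y" for j
    using sums_rho_gen_Fourier[OF assms(1) B Y X assms(4,6) correlation_basis_L2_01[OF B]
        standardized_correlation_basis[OF B, of "Suc j"]]
    by (simp add: rhoB_def rho_gen_commute[of M _ _ Y X])
  then have inner: "(\<lambda>k. alpha B (Suc j) g * alpha B (Suc k) h * rhoB B (Suc j) (Suc k) M X Y)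
      sums (alpha B (Suc j) g * rho_gen M (B (Suc j)) h X Y)" for j
    by (auto dest: sums_mult[of _ _ "alpha B (Suc j) g"] simp: mult.assoc)
  show ?thesis
    using inner outer sums_unique[OF inner] Parseval_standardized[OF B] assms(3-6)
    by (auto intro: sums_summable)
qed

end
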